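(* Let $d\geq2$ and let $f\in\operatorname{BV}(\mathbb{R}^d)$ have bounded support. For $s>0$ let $G^s=\{f>s\}$ and for $s<0$ let $G^s=\{f<s\}$. Assume that the level sets $G^s$ satisfy uniform density estimates at some scale $r_0>0$ and constant $C\in(0,1)$ independent of $s$, i.e. for every $s$ and every $x\in\partial G^s$, $$\frac{|G^s\cap B(x,r)|}{|B(x,r)|}\geq C\ \text{ for }0<r<r_0,\qquad\frac{|B(x,r)\setminus G^s|}{|B(x,r)|}\geq C\ \text{ for }0<r\leq r_0.$$ Then for a.e. $s$, $$\lim_{\nu\to0}d_H(G^s,G^{s+\nu})=0\quad\text{and}\quad\lim_{\nu\to0}d_H(\mathbb{R}^d\setminus G^s,\mathbb{R}^d\setminus G^{s+\nu})=0.$$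
   Context: Convention: each measurable set $E$ is identified with its representative whose topological boundary is $\partial E=\{x:0<|E\cap B(x,r)|/|B(x,r)|<1\ \forall r>0\}$. $d_H(E,F)=\max\{\sup_{x\in E}\operatorname{dist}(x,F),\sup_{y\in F}\operatorname{dist}(y,E)\}$ is the Hausdorff distance. *)

theory Defs
  imports "HOL-Analysis.Analysis"
begin

definition divergence :: "('a::euclidean_space \<Rightarrow> 'a) \<Rightarrow> 'a \<Rightarrow> real" where
  "divergence \<phi> x = (\<Sum>b\<in>Basis. (frechet_derivative \<phi> (at x) b) \<bullet> b)"

definition BV_test_field :: "('a::euclidean_space \<Rightarrow> 'a) \<Rightarrow> bool" where
  "BV_test_field \<phi> \<longleftrightarrow>
     (\<forall>x. \<phi> differentiable (at x)) \<and>
     (\<forall>b\<in>Basis. continuous_on UNIV (\<lambda>x. frechet_derivative \<phi> (at x) b)) \<and>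
     bounded {x. \<phi> x \<noteq> 0} \<and>
     (\<forall>x. norm (\<phi> x) \<le> 1)"

definition BV :: "('a::euclidean_space \<Rightarrow> real) \<Rightarrow> bool" where
  "BV f \<longleftrightarrow> integrable lebesgue f \<and>
     (\<exists>M. \<forall>\<phi>. BV_test_field \<phi> \<longrightarrow>
        (\<integral>x. f x * divergence \<phi> x \<partial>lebesgue) \<le> M)"

text \<open>Normalized representative of a measurable set E (Maggi, Prop. 12.19):
  add points where E has full measure in a ball, remove points where it has null measure in a ball.
  Its topological boundary is {x. 0 < |E \<inter> B(x,r)| < |B(x,r)| for all r > 0}.\<close>
definition normalized_rep :: "'a::euclidean_space set \<Rightarrow> 'a set" where
  "normalized_rep E =
     (E \<union> {x. \<exists>r>0. measure lebesgue (ball x r - E) = 0})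
       - {x. \<exists>r>0. measure lebesgue (E \<inter> ball x r) = 0}"

definition level_set :: "('a::euclidean_space \<Rightarrow> real) \<Rightarrow> real \<Rightarrow> 'a set" where
  "level_set f s = normalized_rep (if s > 0 then {x. f x > s} else {x. f x < s})"

text \<open>Extended-real distance from a point to a set (\<infinity> for the empty set) and
  Hausdorff distance (valued in [0,\<infinity>], with d_H of two empty sets being 0).\<close>
definition edist_set :: "'a::metric_space \<Rightarrow> 'a set \<Rightarrow> ereal" where
  "edist_set x F = (INF y\<in>F. ereal (dist x y))"

definition hausdorff_dist :: "'a::metric_space set \<Rightarrow> 'a set \<Rightarrow> ereal" where
  "hausdorff_dist E F = Sup ({0} \<union> (\<lambda>x. edist_set x F) ` E \<union> (\<lambda>y. edist_set y E) ` F)"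

end

theory Submission
  imports Defs
begin

text \<open>Fix \<open>\<delta> > 0\<close> and put
  \<open>\<rho> = min \<delta> r\<^sub>0 / 2\<close>. If a point \<open>x\<close> of \<open>G\<^sup>s\<close> lies farther than \<open>\<delta>\<close> from \<open>G\<^sup>t\<close>, then
  either \<open>B(x, \<delta>/2)\<close> contains a boundary point \<open>y\<close> of \<open>G\<^sup>s\<close>, and the density estimate at \<open>y\<close>
  gives \<open>|G\<^sup>s - G\<^sup>t| \<ge> |G\<^sup>s \<inter> B(y, \<rho>)| \<ge> C |B(0, \<rho>)|\<close>, or \<open>B(x, \<delta>/2) \<subseteq> G\<^sup>s\<close> by
  connectedness, with the same conclusion. Arguing likewise with \<open>s\<close> and \<open>t\<close> exchanged and for
  the complements, \<open>d\<^sub>H \<le> \<delta>\<close> as soon as \<open>|G\<^sup>s \<triangle> G\<^sup>t| < C |B(0, \<rho>)|\<close>. Up to a null set,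
  \<open>G\<^sup>s \<triangle> G\<^sup>s\<^sup>+\<^sup>\<nu>\<close> lies in the band \<open>{|f - s| \<le> |\<nu>|}\<close>, whose measure tends to
  \<open>|{f = s}|\<close> as \<open>\<nu> \<rightarrow> 0\<close> (the bands have finite measure because \<open>f\<close> is integrable and
  \<open>s \<noteq> 0\<close>); and \<open>|{f = s}| = 0\<close> for all but countably many \<open>s\<close>.\<close>

lemma lmeasurable_Int_ball: "A \<in> sets lebesgue \<Longrightarrow> A \<inter> ball x r \<in> lmeasurable"
  by (rule fmeasurableI2[OF lmeasurable_ball, of _ x r]) auto

lemma negligible_if_locally_negligible:
  fixes S :: "'a::euclidean_space set"
  assumes "\<And>x. x \<in> S \<Longrightarrow> \<exists>r>0. negligible (S \<inter> ball x r)"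
  shows "negligible S"
proof (rule locally_negligible_alt[THEN iffD2], intro ballI)
  fix x assume "x \<in> S"
  with assms obtain r where "r > 0" "negligible (S \<inter> ball x r)"
    by blast
  with \<open>x \<in> S\<close> show "\<exists>U. openin (top_of_set S) U \<and> x \<in> U \<and> negligible U"
    by (intro exI[of _ "S \<inter> ball x r"]) (auto simp: openin_open_Int)
qed

lemma negligible_sym_diff_normalized_rep:
  fixes E :: "'a::euclidean_space set"
  assumes E: "E \<in> sets lebesgue"
  shows "negligible (sym_diff E (normalized_rep E))"
proof -
  define N1 where "N1 = {x. \<exists>r>0. measure lebesgue (ball x r - E) = 0}"
  define N2 where "N2 = {x. \<exists>r>0. measure lebesgue (E \<inter> ball x r) = 0}"
  have "negligible (N1 - E)"
  proof (rule negligible_if_locally_negligible)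
    fix x assume "x \<in> N1 - E"
    then obtain r where "r > 0" "measure lebesgue (ball x r - E) = 0"
      unfolding N1_def by blast
    moreover have "ball x r - E \<in> lmeasurable"
      using E by (simp add: fmeasurable_Diff)
    ultimately have "r > 0" "negligible (ball x r - E)"
      by (simp_all add: negligible_iff_measure0)
    then show "\<exists>r>0. negligible ((N1 - E) \<inter> ball x r)"
      by (blast intro: negligible_subset)
  qed
  moreover have "negligible (E \<inter> N2)"
  proof (rule negligible_if_locally_negligible)
    fix x assume "x \<in> E \<inter> N2"
    then obtain r where "r > 0" "measure lebesgue (E \<inter> ball x r) = 0"
      unfolding N2_def by blast
    moreover have "E \<inter> ball x r \<in> lmeasurable"
      using E by (rule lmeasurable_Int_ball)
    ultimately have "r > 0" "negligible (E \<inter> ball x r)"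
      by (simp_all add: negligible_iff_measure0)
    then show "\<exists>r>0. negligible ((E \<inter> N2) \<inter> ball x r)"
      by (blast intro: negligible_subset)
  qed
  ultimately have "negligible ((N1 - E) \<union> (E \<inter> N2))"
    by (rule negligible_Un)
  moreover have "normalized_rep E = (E \<union> N1) - N2"
    unfolding normalized_rep_def N1_def N2_def ..
  then have "sym_diff E (normalized_rep E) \<subseteq> (N1 - E) \<union> (E \<inter> N2)"
    by blast
  ultimately show ?thesis
    by (rule negligible_subset)
qed

lemma sets_lebesgue_normalized_rep:
  fixes E :: "'a::euclidean_space set"
  shows "E \<in> sets lebesgue \<Longrightarrow> normalized_rep E \<in> sets lebesgue"
  using negligible_sym_diff_normalized_rep sets_negligible_symdiff by blast

lemma emeasure_sym_diff_cong_negligible: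
  fixes A A' B B' :: "'a::euclidean_space set"
  assumes A: "A \<in> sets lebesgue" and B: "B \<in> sets lebesgue"
    and A': "negligible (sym_diff A A')" and B': "negligible (sym_diff B B')"
  shows "emeasure lebesgue (sym_diff A' B') = emeasure lebesgue (sym_diff A B)"
proof (rule emeasure_eq_AE)
  have "AE x in lebesgue. x \<notin> sym_diff A A' \<union> sym_diff B B'"
    using A' B' by (intro AE_not_in) (simp add: negligible_iff_null_sets[symmetric])
  then show "AE x in lebesgue. x \<in> sym_diff A' B' \<longleftrightarrow> x \<in> sym_diff A B"
    by (rule AE_mp) (intro AE_I2, blast)
  have "A' \<in> sets lebesgue" "B' \<in> sets lebesgue"
    using sets_negligible_symdiff[OF A A'] sets_negligible_symdiff[OF B B'] .
  then show "sym_diff A' B' \<in> sets lebesgue"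
    by auto
qed (use A B in auto)

lemma countable_nonzero_atoms:
  fixes f :: "'a \<Rightarrow> real"
  assumes f: "integrable M f"
  shows "countable {s. s \<noteq> 0 \<and> emeasure M {x\<in>space M. f x = s} \<noteq> 0}"
proof -
  have [measurable]: "f \<in> borel_measurable M"
    using f by auto
  \<comment> \<open>The image of the measure with density \<open>|f|\<close> under \<open>f\<close> is finite and gives \<open>{s}\<close>
      the mass \<open>|s| \<cdot> |{f = s}|\<close>.\<close>
  define D where "D = distr (density M (\<lambda>x. ennreal \<bar>f x\<bar>)) borel f"
  have emeasure_D: "emeasure D A = (\<integral>\<^sup>+x. ennreal \<bar>f x\<bar> * indicator (f -` A \<inter> space M) x \<partial>M)"
    if "A \<in> sets borel" for A
    using that by (simp add: D_def emeasure_distr emeasure_density)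
  have "space D = UNIV"
    by (simp add: D_def)
  then have "emeasure D (space D) = (\<integral>\<^sup>+x. ennreal \<bar>f x\<bar> * indicator (space M) x \<partial>M)"
    using emeasure_D[of UNIV] by simp
  also have "\<dots> = (\<integral>\<^sup>+x. ennreal (norm (f x)) \<partial>M)"
    by (intro nn_integral_cong) simp
  also have "\<dots> < \<infinity>"
    using f by (simp add: integrable_iff_bounded)
  finally interpret finite_measure D
    by (intro finite_measureI) simp
  have mass: "emeasure D {s} = ennreal \<bar>s\<bar> * emeasure M {x\<in>space M. f x = s}" for s
  proof -
    have "emeasure D {s} = (\<integral>\<^sup>+x. ennreal \<bar>s\<bar> * indicator {x\<in>space M. f x = s} x \<partial>M)"
      by (simp add: emeasure_D) (intro nn_integral_cong, auto split: split_indicator)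
    also have "\<dots> = ennreal \<bar>s\<bar> * emeasure M {x\<in>space M. f x = s}"
      by (simp add: nn_integral_cmult_indicator)
    finally show ?thesis .
  qed
  have "{s. s \<noteq> 0 \<and> emeasure M {x\<in>space M. f x = s} \<noteq> 0} \<subseteq> {s. measure D {s} \<noteq> 0}"
  proof safe
    fix s assume "s \<noteq> 0" "emeasure M {x\<in>space M. f x = s} \<noteq> 0" "measure D {s} = 0"
    then have "emeasure D {s} = 0"
      by (simp add: emeasure_eq_measure)
    with mass[of s] \<open>s \<noteq> 0\<close> \<open>emeasure M {x\<in>space M. f x = s} \<noteq> 0\<close> show False
      by simp
  qed
  then show ?thesis
    using countable_support countable_subset by blast
qed

lemma AE_nonzero_null_level:
  fixes f :: "'a \<Rightarrow> real"
  assumes "integrable M f"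
  shows "AE s in lborel. s \<noteq> 0 \<and> emeasure M {x\<in>space M. f x = s} = 0"
proof -
  have "countable (insert 0 {s. s \<noteq> 0 \<and> emeasure M {x\<in>space M. f x = s} \<noteq> 0})"
    using countable_nonzero_atoms[OF assms] by simp
  then have "AE s in lborel. s \<notin> insert 0 {s. s \<noteq> 0 \<and> emeasure M {x\<in>space M. f x = s} \<noteq> 0}"
    by (intro AE_not_in countable_imp_null_set_lborel)
  then show ?thesis
    by eventually_elim auto
qed

lemma LIMSEQ_emeasure_band:
  fixes f :: "'a \<Rightarrow> real"
  assumes [measurable]: "f \<in> borel_measurable M"
    and null: "emeasure M {x\<in>space M. f x = s} = 0"
    and \<epsilon>: "0 < \<epsilon>" and finite: "emeasure M {x\<in>space M. \<bar>f x - s\<bar> \<le> \<epsilon>} \<noteq> \<infinity>"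
  shows "(\<lambda>n. emeasure M {x\<in>space M. \<bar>f x - s\<bar> \<le> \<epsilon> / Suc n}) \<longlonglongrightarrow> 0"
proof -
  define S where "S n = {x\<in>space M. \<bar>f x - s\<bar> \<le> \<epsilon> / Suc n}" for n
  have "S n \<in> sets M" for n
    unfolding S_def by measurable
  then have S_sets: "range S \<subseteq> sets M"
    by blast
  have S_dec: "decseq S"
    unfolding S_def using \<epsilon> by (intro decseq_SucI) (auto simp: frac_le order_trans)
  have S_finite: "emeasure M (S n) \<noteq> \<infinity>" for n
  proof -
    have "S n \<subseteq> {x\<in>space M. \<bar>f x - s\<bar> \<le> \<epsilon>}"
      unfolding S_def using \<epsilon> by (auto elim: order_trans simp: divide_le_eq)
    then have "emeasure M (S n) \<le> emeasure M {x\<in>space M. \<bar>f x - s\<bar> \<le> \<epsilon>}"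
      by (rule emeasure_mono) measurable
    then show ?thesis
      using finite by (auto simp: top_unique)
  qed
  have S_Inter: "(\<Inter>n. S n) = {x\<in>space M. f x = s}"
  proof (intro equalityI subsetI)
    fix x assume x: "x \<in> (\<Inter>n. S n)"
    have "\<bar>f x - s\<bar> \<le> 0"
    proof (rule field_le_epsilon)
      fix d :: real assume "0 < d"
      then obtain n where "\<epsilon> < real n * d"
        using reals_Archimedean3 by blast
      then have "\<epsilon> / Suc n \<le> d"
        using \<open>0 < d\<close> by (simp add: divide_le_eq algebra_simps)
      moreover have "\<bar>f x - s\<bar> \<le> \<epsilon> / Suc n"
        using x unfolding S_def by blast
      ultimately show "\<bar>f x - s\<bar> \<le> 0 + d"
        by simp
    qed
    then show "x \<in> {x\<in>space M. f x = s}"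
      using x unfolding S_def by auto
  qed (use \<epsilon> in \<open>auto simp: S_def\<close>)
  have "(\<lambda>n. emeasure M (S n)) \<longlonglongrightarrow> 0"
    using Lim_emeasure_decseq[OF S_sets S_dec S_finite] unfolding S_Inter null .
  then show ?thesis
    unfolding S_def .
qed

lemma tendsto_emeasure_band:
  fixes f :: "'a \<Rightarrow> real"
  assumes "f \<in> borel_measurable M"
    and "emeasure M {x\<in>space M. f x = s} = 0"
    and \<epsilon>: "0 < \<epsilon>" and "emeasure M {x\<in>space M. \<bar>f x - s\<bar> \<le> \<epsilon>} \<noteq> \<infinity>"
  shows "((\<lambda>\<nu>. emeasure M {x\<in>space M. \<bar>f x - s\<bar> \<le> \<bar>\<nu>\<bar>}) \<longlongrightarrow> 0) (at 0)"
proof (rule order_tendstoI)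
  fix e :: ennreal assume "0 < e"
  with LIMSEQ_emeasure_band[OF assms]
  have "\<forall>\<^sub>F n in sequentially. emeasure M {x\<in>space M. \<bar>f x - s\<bar> \<le> \<epsilon> / Suc n} < e"
    by (rule order_tendstoD(2))
  then obtain N where N: "emeasure M {x\<in>space M. \<bar>f x - s\<bar> \<le> \<epsilon> / Suc N} < e"
    by (auto simp: eventually_sequentially)
  have "emeasure M {x\<in>space M. \<bar>f x - s\<bar> \<le> \<bar>\<nu>\<bar>} < e" if "\<bar>\<nu>\<bar> < \<epsilon> / Suc N" for \<nu>
  proof -
    have "emeasure M {x\<in>space M. \<bar>f x - s\<bar> \<le> \<bar>\<nu>\<bar>} \<le> emeasure M {x\<in>space M. \<bar>f x - s\<bar> \<le> \<epsilon> / Suc N}"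
      using that assms(1) by (intro emeasure_mono) auto
    then show ?thesis
      using N by order
  qed
  then show "\<forall>\<^sub>F \<nu> in at 0. emeasure M {x\<in>space M. \<bar>f x - s\<bar> \<le> \<bar>\<nu>\<bar>} < e"
    unfolding eventually_at using \<epsilon> by (intro exI[of _ "\<epsilon> / Suc N"]) auto
qed simp

lemma emeasure_band_finite:
  fixes f :: "'a \<Rightarrow> real"
  assumes f: "integrable M f" and "s \<noteq> 0"
  shows "emeasure M {x\<in>space M. \<bar>f x - s\<bar> \<le> \<bar>s\<bar> / 2} \<noteq> \<infinity>"
proof -
  have [measurable]: "f \<in> borel_measurable M"
    using f by auto
  have "{x\<in>space M. \<bar>s\<bar> / 2 \<le> \<bar>f x\<bar>} \<in> sets M"
    by measurable
  then have "emeasure M {x\<in>space M. \<bar>f x - s\<bar> \<le> \<bar>s\<bar> / 2} \<le> emeasure M {x\<in>space M. \<bar>s\<bar> / 2 \<le> \<bar>f x\<bar>}"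
    by (rule emeasure_mono[rotated]) (auto simp: abs_if split: if_splits)
  also have "\<dots> \<le> ennreal (2 / \<bar>s\<bar> * (\<integral>x. \<bar>f x\<bar> \<partial>M))"
    using integral_Markov_inequality[of M "\<lambda>x. \<bar>f x\<bar>" "\<bar>s\<bar> / 2"] f \<open>s \<noteq> 0\<close> by simp
  finally show ?thesis
    by (auto simp: top_unique)
qed

definition raw_level_set :: "('a \<Rightarrow> real) \<Rightarrow> real \<Rightarrow> 'a set" where
  "raw_level_set f s = (if s > 0 then {x. f x > s} else {x. f x < s})"

lemma level_set_eq_normalized_rep: "level_set f s = normalized_rep (raw_level_set f s)"
  by (simp add: level_set_def raw_level_set_def)

lemma sets_lebesgue_raw_level_set:
  assumes [measurable]: "f \<in> borel_measurable lebesgue"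
  shows "raw_level_set f s \<in> sets lebesgue"
proof -
  have "raw_level_set f s = {x\<in>space lebesgue. if s > 0 then f x > s else f x < s}"
    by (auto simp: raw_level_set_def)
  also have "\<dots> \<in> sets lebesgue"
    by measurable
  finally show ?thesis .
qed

lemma sym_diff_raw_level_set_subset:
  assumes "\<bar>\<nu>\<bar> < \<bar>s\<bar>"
  shows "sym_diff (raw_level_set f s) (raw_level_set f (s + \<nu>)) \<subseteq> {x. \<bar>f x - s\<bar> \<le> \<bar>\<nu>\<bar>}"
proof -
  have "0 < s \<longleftrightarrow> 0 < s + \<nu>"
    using assms by linarith
  then show ?thesis
    by (auto simp: raw_level_set_def)
qed

lemma tendsto_emeasure_sym_diff_level_set:
  fixes f :: "'a::euclidean_space \<Rightarrow> real"
  assumes f: "integrable lebesgue f" and "s \<noteq> 0" and null: "emeasure lebesgue {x. f x = s} = 0"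
  shows "((\<lambda>\<nu>. emeasure lebesgue (sym_diff (level_set f s) (level_set f (s + \<nu>)))) \<longlongrightarrow> 0) (at 0)"
proof -
  have fm [measurable]: "f \<in> borel_measurable lebesgue"
    using f by auto
  have band: "((\<lambda>\<nu>. emeasure lebesgue {x. \<bar>f x - s\<bar> \<le> \<bar>\<nu>\<bar>}) \<longlongrightarrow> 0) (at 0)"
    using tendsto_emeasure_band[OF fm _ _ emeasure_band_finite[OF f \<open>s \<noteq> 0\<close>]] null \<open>s \<noteq> 0\<close>
    by simp
  have band_sets: "{x. \<bar>f x - s\<bar> \<le> \<eta>} \<in> sets lebesgue" for \<eta>
  proof -
    have "{x\<in>space lebesgue. \<bar>f x - s\<bar> \<le> \<eta>} \<in> sets lebesgue"
      by measurable
    then show ?thesis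
      by simp
  qed
  have "\<forall>\<^sub>F \<nu> in at 0. emeasure lebesgue (sym_diff (raw_level_set f s) (raw_level_set f (s + \<nu>)))
                        \<le> emeasure lebesgue {x. \<bar>f x - s\<bar> \<le> \<bar>\<nu>\<bar>}"
    unfolding eventually_at using \<open>s \<noteq> 0\<close>
    by (intro exI[of _ "\<bar>s\<bar>"]) (auto intro!: emeasure_mono sym_diff_raw_level_set_subset band_sets)
  then have "((\<lambda>\<nu>. emeasure lebesgue (sym_diff (raw_level_set f s) (raw_level_set f (s + \<nu>)))) \<longlongrightarrow> 0) (at 0)"
    by (intro tendsto_sandwich[OF _ _ tendsto_const band]) auto
  moreover have "emeasure lebesgue (sym_diff (level_set f s) (level_set f t))
      = emeasure lebesgue (sym_diff (raw_level_set f s) (raw_level_set f t))" for t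
    unfolding level_set_eq_normalized_rep
    by (intro emeasure_sym_diff_cong_negligible negligible_sym_diff_normalized_rep
        sets_lebesgue_raw_level_set fm)
  ultimately show ?thesis
    by simp
qed

definition lower_density_estimate :: "real \<Rightarrow> real \<Rightarrow> 'a::euclidean_space set \<Rightarrow> bool" where
  "lower_density_estimate C r0 A \<longleftrightarrow>
     (\<forall>x\<in>frontier A. \<forall>r. 0 < r \<and> r < r0 \<longrightarrow>
        C \<le> measure lebesgue (A \<inter> ball x r) / measure lebesgue (ball x r))"

lemma lower_density_estimate_Compl_iff:
  "lower_density_estimate C r0 (- A) \<longleftrightarrow>
     (\<forall>x\<in>frontier A. \<forall>r. 0 < r \<and> r < r0 \<longrightarrow>
        C \<le> measure lebesgue (ball x r - A) / measure lebesgue (ball x r))"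
proof -
  have "ball x r - A = - A \<inter> ball x r" for x r
    by blast
  then show ?thesis
    by (simp add: lower_density_estimate_def frontier_complement)
qed

lemma measure_ball_eq_measure_ball_0:
  fixes x :: "'a::euclidean_space"
  shows "measure lebesgue (ball x r) = measure lebesgue (ball (0::'a) r)"
proof (cases "r \<ge> 0")
  case True
  then show ?thesis
    using content_ball_conv_unit_ball[OF True, of x] content_ball_conv_unit_ball[OF True, of "0::'a"] by simp
qed (simp add: ball_empty)

lemma measure_Int_ball_ge_lower_density:
  fixes A :: "'a::euclidean_space set"
  assumes dens: "lower_density_estimate C r0 A" and A: "A \<in> sets lebesgue" and "C \<le> 1"
    and \<rho>: "0 < \<rho>" "\<rho> < r0" "2 * \<rho> \<le> \<delta>" and x: "x \<in> A"
  shows "C * measure lebesgue (ball (0::'a) \<rho>) \<le> measure lebesgue (A \<inter> ball x \<delta>)"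
proof (cases "ball x (\<delta> / 2) \<inter> frontier A = {}")
  case True
  have "x \<in> ball x (\<delta> / 2)"
    using \<rho> by simp
  then have "ball x (\<delta> / 2) \<subseteq> A"
    using True x connected_Int_frontier[of "ball x (\<delta> / 2)" A] by blast
  then have "ball x \<rho> \<subseteq> A \<inter> ball x \<delta>"
    using \<rho> by (auto simp: subset_ball)
  then have "measure lebesgue (ball x \<rho>) \<le> measure lebesgue (A \<inter> ball x \<delta>)"
    using A by (intro measure_mono_fmeasurable lmeasurable_Int_ball) auto
  moreover have "C * measure lebesgue (ball x \<rho>) \<le> measure lebesgue (ball x \<rho>)"
    using mult_right_mono[OF \<open>C \<le> 1\<close> measure_nonneg] by simp
  ultimately show ?thesis
    unfolding measure_ball_eq_measure_ball_0[of x \<rho>, symmetric] by linarith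
next
  case False
  then obtain y where y: "y \<in> ball x (\<delta> / 2)" "y \<in> frontier A"
    by blast
  have "0 < measure lebesgue (ball y \<rho>)"
    using content_ball_pos[OF \<rho>(1)] by simp
  moreover have "C \<le> measure lebesgue (A \<inter> ball y \<rho>) / measure lebesgue (ball y \<rho>)"
    using dens y(2) \<rho> unfolding lower_density_estimate_def by blast
  ultimately have "C * measure lebesgue (ball y \<rho>) \<le> measure lebesgue (A \<inter> ball y \<rho>)"
    by (simp add: pos_le_divide_eq)
  also have "\<dots> \<le> measure lebesgue (A \<inter> ball x \<delta>)"
  proof (intro measure_mono_fmeasurable lmeasurable_Int_ball A)
    have "dist y x + \<rho> \<le> \<delta>"
      using y(1) \<rho> by (simp add: dist_commute)
    then have "ball y \<rho> \<subseteq> ball x \<delta>"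
      by (subst ball_subset_ball_iff) simp
    then show "A \<inter> ball y \<rho> \<subseteq> A \<inter> ball x \<delta>"
      by blast
  qed (use A in auto)
  finally show ?thesis
    unfolding measure_ball_eq_measure_ball_0[of y \<rho>, symmetric] .
qed

lemma edist_set_le_if_emeasure_Diff_less:
  fixes A B :: "'a::euclidean_space set"
  assumes "lower_density_estimate C r0 A" and A: "A \<in> sets lebesgue" and B: "B \<in> sets lebesgue"
    and "C \<le> 1" "0 < \<rho>" "\<rho> < r0" "2 * \<rho> \<le> \<delta>" "x \<in> A"
    and small: "emeasure lebesgue (A - B) < ennreal (C * measure lebesgue (ball (0::'a) \<rho>))"
  shows "edist_set x B \<le> ereal \<delta>"
proof (rule ccontr)
  assume far: "\<not> edist_set x B \<le> ereal \<delta>"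
  have "y \<notin> ball x \<delta>" if "y \<in> B" for y
  proof -
    have "edist_set x B \<le> ereal (dist x y)"
      unfolding edist_set_def using that by (rule INF_lower)
    with far show ?thesis
      using order_trans[of "edist_set x B" "ereal (dist x y)" "ereal \<delta>"] by auto
  qed
  then have "emeasure lebesgue (A \<inter> ball x \<delta>) \<le> emeasure lebesgue (A - B)"
    using A B by (intro emeasure_mono) auto
  moreover have "ennreal (C * measure lebesgue (ball (0::'a) \<rho>)) \<le> emeasure lebesgue (A \<inter> ball x \<delta>)"
    using measure_Int_ball_ge_lower_density[OF assms(1,2,4-8)] A
    by (simp add: emeasure_eq_measure2 lmeasurable_Int_ball)
  ultimately show False
    using small by simp
qed

lemma hausdorff_dist_nonneg: "0 \<le> hausdorff_dist E F"
  unfolding hausdorff_dist_def by (rule Sup_upper) simp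

lemma hausdorff_dist_le:
  assumes "\<And>x. x \<in> E \<Longrightarrow> edist_set x F \<le> ereal \<delta>" "\<And>y. y \<in> F \<Longrightarrow> edist_set y E \<le> ereal \<delta>"
    and "0 \<le> \<delta>"
  shows "hausdorff_dist E F \<le> ereal \<delta>"
  unfolding hausdorff_dist_def using assms by (auto intro!: Sup_least)

lemma hausdorff_dist_le_if_emeasure_sym_diff_less:
  fixes A B :: "'a::euclidean_space set"
  assumes "lower_density_estimate C r0 A" "lower_density_estimate C r0 B"
    and "A \<in> sets lebesgue" "B \<in> sets lebesgue" "C \<le> 1" "0 < \<rho>" "\<rho> < r0" "2 * \<rho> \<le> \<delta>"
    and small: "emeasure lebesgue (sym_diff A B) < ennreal (C * measure lebesgue (ball (0::'a) \<rho>))"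
  shows "hausdorff_dist A B \<le> ereal \<delta>"
proof (rule hausdorff_dist_le)
  have "emeasure lebesgue (A - B) \<le> emeasure lebesgue (sym_diff A B)"
    "emeasure lebesgue (B - A) \<le> emeasure lebesgue (sym_diff A B)"
    using assms(3,4) by (intro emeasure_mono; auto)+
  then have AB: "emeasure lebesgue (A - B) < ennreal (C * measure lebesgue (ball (0::'a) \<rho>))"
    and BA: "emeasure lebesgue (B - A) < ennreal (C * measure lebesgue (ball (0::'a) \<rho>))"
    using small by (auto intro: le_less_trans)
  show "edist_set x B \<le> ereal \<delta>" if "x \<in> A" for x
    using edist_set_le_if_emeasure_Diff_less[OF assms(1,3,4,5-8) that AB] .
  show "edist_set y A \<le> ereal \<delta>" if "y \<in> B" for y
    using edist_set_le_if_emeasure_Diff_less[OF assms(2,4,3,5-8) that BA] .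
qed (use assms in linarith)

lemma tendsto_hausdorff_dist_0_if_emeasure_sym_diff:
  fixes A :: "'b \<Rightarrow> 'a::euclidean_space set"
  assumes "0 < C" "C \<le> 1" "0 < r0"
    and A0: "lower_density_estimate C r0 A0" "A0 \<in> sets lebesgue"
    and A: "\<forall>\<^sub>F t in F. lower_density_estimate C r0 (A t) \<and> A t \<in> sets lebesgue"
    and lim: "((\<lambda>t. emeasure lebesgue (sym_diff A0 (A t))) \<longlongrightarrow> 0) F"
  shows "((\<lambda>t. hausdorff_dist A0 (A t)) \<longlongrightarrow> 0) F"
proof (rule order_tendstoI)
  fix e :: ereal assume "e < 0"
  then show "\<forall>\<^sub>F t in F. e < hausdorff_dist A0 (A t)"
    using hausdorff_dist_nonneg by (auto intro: always_eventually less_le_trans)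
next
  fix e :: ereal assume "0 < e"
  then obtain \<delta> where "0 < ereal \<delta>" "ereal \<delta> < e"
    using ereal_dense2 by blast
  define \<rho> where "\<rho> = min (\<delta> / 2) (r0 / 2)"
  have \<rho>: "0 < \<rho>" "\<rho> < r0" "2 * \<rho> \<le> \<delta>"
    using \<open>0 < ereal \<delta>\<close> \<open>0 < r0\<close> by (auto simp: \<rho>_def)
  have "0 < measure lebesgue (ball (0::'a) \<rho>)"
    using content_ball_pos[OF \<rho>(1)] by simp
  then have "0 < ennreal (C * measure lebesgue (ball (0::'a) \<rho>))"
    using \<open>0 < C\<close> by simp
  with lim have "\<forall>\<^sub>F t in F. emeasure lebesgue (sym_diff A0 (A t)) < ennreal (C * measure lebesgue (ball (0::'a) \<rho>))"
    by (rule order_tendstoD(2))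
  with A show "\<forall>\<^sub>F t in F. hausdorff_dist A0 (A t) < e"
  proof eventually_elim
    case (elim t)
    then have "hausdorff_dist A0 (A t) \<le> ereal \<delta>"
      using A0 \<rho> \<open>C \<le> 1\<close> by (intro hausdorff_dist_le_if_emeasure_sym_diff_less) auto
    then show ?case
      using \<open>ereal \<delta> < e\<close> by (rule le_less_trans)
  qed
qed

lemma tendsto_hausdorff_dist_shift:
  fixes G :: "real \<Rightarrow> 'a::euclidean_space set"
  assumes "0 < C" "C \<le> 1" "0 < r0" "s \<noteq> 0"
    and dens: "\<And>u. u \<noteq> 0 \<Longrightarrow> lower_density_estimate C r0 (G u)" and sets: "\<And>u. G u \<in> sets lebesgue"
    and lim: "((\<lambda>\<nu>. emeasure lebesgue (sym_diff (G s) (G (s + \<nu>)))) \<longlongrightarrow> 0) (at 0)"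
  shows "((\<lambda>\<nu>. hausdorff_dist (G s) (G (s + \<nu>))) \<longlongrightarrow> 0) (at 0)"
proof (rule tendsto_hausdorff_dist_0_if_emeasure_sym_diff[OF assms(1-3) dens[OF \<open>s \<noteq> 0\<close>] sets _ lim])
  have "\<forall>\<^sub>F \<nu> in at 0. s + \<nu> \<noteq> 0"
    unfolding eventually_at using \<open>s \<noteq> 0\<close> by (intro exI[of _ "\<bar>s\<bar>"]) auto
  then show "\<forall>\<^sub>F \<nu> in at 0. lower_density_estimate C r0 (G (s + \<nu>)) \<and> G (s + \<nu>) \<in> sets lebesgue"
    by eventually_elim (simp add: dens sets)
qed

theorem proposition5p8:
  fixes f :: "'a::euclidean_space \<Rightarrow> real" and r0 C :: real
  assumes dim: "DIM('a) \<ge> 2"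
    and bv: "BV f"
    and supp: "\<exists>R. AE x in lebesgue. norm x > R \<longrightarrow> f x = 0"
    and r0: "r0 > 0"
    and C: "0 < C" "C < 1"
    and dens_in: "\<And>s x r. s \<noteq> 0 \<Longrightarrow> x \<in> frontier (level_set f s) \<Longrightarrow> 0 < r \<Longrightarrow> r < r0 \<Longrightarrow>
        measure lebesgue (level_set f s \<inter> ball x r) / measure lebesgue (ball x r) \<ge> C"
    and dens_out: "\<And>s x r. s \<noteq> 0 \<Longrightarrow> x \<in> frontier (level_set f s) \<Longrightarrow> 0 < r \<Longrightarrow> r \<le> r0 \<Longrightarrow>
        measure lebesgue (ball x r - level_set f s) / measure lebesgue (ball x r) \<ge> C"
  shows "AE s in lborel.
           ((\<lambda>\<nu>. hausdorff_dist (level_set f s) (level_set f (s + \<nu>))) \<longlongrightarrow> 0) (at 0) \<and>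
           ((\<lambda>\<nu>. hausdorff_dist (- level_set f s) (- level_set f (s + \<nu>))) \<longlongrightarrow> 0) (at 0)"
proof -
  have f: "integrable lebesgue f"
    using bv by (simp add: BV_def)
  then have "f \<in> borel_measurable lebesgue"
    by auto
  then have sets: "level_set f s \<in> sets lebesgue" for s
    unfolding level_set_eq_normalized_rep by (intro sets_lebesgue_normalized_rep sets_lebesgue_raw_level_set)
  then have sets_Compl: "- level_set f s \<in> sets lebesgue" for s
    by (simp add: Compl_in_sets_lebesgue)
  have dens: "lower_density_estimate C r0 (level_set f s)" if "s \<noteq> 0" for s
    using dens_in[OF that] by (auto simp: lower_density_estimate_def)
  have dens_Compl: "lower_density_estimate C r0 (- level_set f s)" if "s \<noteq> 0" for s
    unfolding lower_density_estimate_Compl_iff using dens_out[OF that] by auto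
  have C1: "C \<le> 1"
    using C by simp
  have compl: "sym_diff (- A) (- B) = sym_diff A B" for A B :: "'a set"
    by blast
  from AE_nonzero_null_level[OF f] show ?thesis
  proof (rule AE_mp, intro AE_I2 impI)
    fix s assume s: "s \<noteq> 0 \<and> emeasure lebesgue {x\<in>space lebesgue. f x = s} = 0"
    then have lim: "((\<lambda>\<nu>. emeasure lebesgue (sym_diff (level_set f s) (level_set f (s + \<nu>)))) \<longlongrightarrow> 0) (at 0)"
      by (intro tendsto_emeasure_sym_diff_level_set[OF f]) auto
    then have "((\<lambda>\<nu>. emeasure lebesgue (sym_diff (- level_set f s) (- level_set f (s + \<nu>)))) \<longlongrightarrow> 0) (at 0)"
      unfolding compl .
    with lim s show "((\<lambda>\<nu>. hausdorff_dist (level_set f s) (level_set f (s + \<nu>))) \<longlongrightarrow> 0) (at 0) \<and>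
        ((\<lambda>\<nu>. hausdorff_dist (- level_set f s) (- level_set f (s + \<nu>))) \<longlongrightarrow> 0) (at 0)"
      using tendsto_hausdorff_dist_shift[OF C(1) C1 r0, of s "level_set f"]
        tendsto_hausdorff_dist_shift[OF C(1) C1 r0, of s "\<lambda>u. - level_set f u"] dens dens_Compl sets sets_Compl
      by simp
  qed
qed

end
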